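(* Let $(\underline x(t),I(t),\underline y(t),J(t),N(t))$ be the coupled process below started from $(\underline x_0,I_0,\underline y_0,J_0,n+m)$ with $I_0=\{1,\dots,n\}$, $J_0=\{1,\dots,n+m\}$. Then for every $t\ge0$, $$\sum_{x=0}^{\varepsilon^{-1}}|\xi_{\underline x(t),I(t)}(x)-\xi_{\underline y(t),J(t)}(x)|\le|D_{\ne}(t)|+m,$$ where $D_{\ne}(t)=\{i\in I(t):x_i(t)\ne y_i(t)\}$.
   Context: Fix $j>0$, $\varepsilon>0$ with $\varepsilon^{-1}\in\mathbb N$, $\Lambda_\varepsilon=\{0,\dots,\varepsilon^{-1}\}$, integers $n>0$, $m\ge0$. A labeled configuration is $(\underline x,I)$ with $I\subset\mathbb N$ finite, $x_i\in\Lambda_\varepsilon$; $\xi_{\underline x,I}(x)=\sum_{i\in I}\mathbf 1_{x_i=x}$. State space $S$: all $(\underline x,I,\underline y,J,N)$ with $I\subset J$, $|J\setminus I|\le m$, $N=\max J$. $I_==\{i\in I:x_i=y_i\}$. Jumps: (1) for each $i\in I\setminus I_=$ and sign $\pm$, at rate $1/2$, $x_i\to x_i\pm1$ (suppressed if outside $\Lambda_\varepsilon$); for each $i\in J\setminus I_=$ and sign, at rate $1/2$, $y_i\to y_i\pm1$ (suppressed if outside); (2) for each $i\in I_=$ and sign, at rate $1/2$, $x_i,y_i$ both move to $x_i\pm1$ (suppressed if outside); (3) at rate $\varepsilon j$: $N\to N+1$, label $N+1$ added to $I$ and $J$ with $x_{N+1}=y_{N+1}=0$; (4) at rate $\varepsilon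 j$: let $i$ be the largest label at the rightmost occupied site of $\underline x$ and $k$ the largest label at the rightmost occupied site of $\underline y$; remove $i$ from $\underline x,I$ and $k$ from $\underline y,J$; if $k\in I$ and $i\ne k$ then: if $x_k\le y_i$ relabel the $\underline y$-particle $i$ as $k$; otherwise relabel the $\underline x$-particle $k$ as $i$; $N$ unchanged. *)

theory Defs
  imports Complex_Main
begin

(* A state (x, I, y, J, N): positions x, y : label => site (only values on I resp. J matter),
   finite label sets I \<subseteq> J, and the counter N. Sites are integers in {0..M}, M = 1/eps. *)
type_synonym cstate = "(nat \<Rightarrow> int) \<times> nat set \<times> (nat \<Rightarrow> int) \<times> nat set \<times> nat"

definition occ :: "(nat \<Rightarrow> int) \<Rightarrow> nat set \<Rightarrow> int \<Rightarrow> nat" where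
  "occ x I p = card {i \<in> I. x i = p}"

definition top_label :: "(nat \<Rightarrow> int) \<Rightarrow> nat set \<Rightarrow> nat" where
  "top_label x I = Max {l \<in> I. x l = Max (x ` I)}"

definition exit_state :: "cstate \<Rightarrow> cstate" where
  "exit_state s = (case s of (x, I, y, J, N) \<Rightarrow>
     if I = {} then (if J = {} then s else (x, I, y, J - {top_label y J}, N))
     else (let i = top_label x I; k = top_label y J in
       if k \<in> I \<and> i \<noteq> k then
         (if x k \<le> y i then (x, I - {i}, y(k := y i), J - {i}, N)
          else (x(i := x k), I - {k}, y, J - {k}, N))
       else (x, I - {i}, y, J - {k}, N)))"

(* Possible jumps (transitions with positive rate) of the coupled process on Lambda = {0..M}.
   Suppressed jumps (leaving Lambda) are simply not transitions. *)
inductive cstep :: "nat \<Rightarrow> cstate \<Rightarrow> cstate \<Rightarrow> bool" for M :: nat where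
  move_x: "\<lbrakk> i \<in> I; x i \<noteq> y i; d \<in> {1, -1}; 0 \<le> x i + d; x i + d \<le> int M \<rbrakk>
      \<Longrightarrow> cstep M (x, I, y, J, N) (x(i := x i + d), I, y, J, N)"
| move_y: "\<lbrakk> i \<in> J; i \<notin> I \<or> x i \<noteq> y i; d \<in> {1, -1}; 0 \<le> y i + d; y i + d \<le> int M \<rbrakk>
      \<Longrightarrow> cstep M (x, I, y, J, N) (x, I, y(i := y i + d), J, N)"
| move_both: "\<lbrakk> i \<in> I; x i = y i; d \<in> {1, -1}; 0 \<le> x i + d; x i + d \<le> int M \<rbrakk>
      \<Longrightarrow> cstep M (x, I, y, J, N) (x(i := x i + d), I, y(i := x i + d), J, N)"
| arrive: "cstep M (x, I, y, J, N)
      (x(Suc N := 0), insert (Suc N) I, y(Suc N := 0), insert (Suc N) J, Suc N)"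
| leave: "cstep M s (exit_state s)"

end

theory Submission
  imports Defs
begin

text \<open>The quantity \<open>|D\<^sub>\<noteq>| + |J - I|\<close> never increases along the coupled process: an
  arrival adds a matched pair, free moves cannot create a mismatch, and in the relabelling
  branch of an exit the particle that takes over the removed label lies on the correct side,
  so no new mismatch appears.  Initially it equals \<open>m\<close>.  On the other hand, each mismatched
  label contributes at most \<open>2\<close> and each label of \<open>J - I\<close> at most \<open>1\<close> to the
  \<open>\<ell>\<^sup>1\<close>-distance of the occupation numbers, which therefore is at most
  \<open>2 |D\<^sub>\<noteq>| + |J - I| \<le> |D\<^sub>\<noteq>| + m\<close>.\<close>

definition mismatch :: "(nat \<Rightarrow> int) \<Rightarrow> (nat \<Rightarrow> int) \<Rightarrow> nat set \<Rightarrow> nat set" where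
  "mismatch x y I = {i \<in> I. x i \<noteq> y i}"

lemma finite_mismatch [simp]: "finite I \<Longrightarrow> finite (mismatch x y I)"
  by (simp add: mismatch_def)

lemma occ_Un:
  assumes "finite A" "finite B" "A \<inter> B = {}"
  shows "occ x (A \<union> B) p = occ x A p + occ x B p"
proof -
  have "{i \<in> A \<union> B. x i = p} = {i \<in> A. x i = p} \<union> {i \<in> B. x i = p}" by blast
  then show ?thesis
    unfolding occ_def using assms by (simp add: card_Un_disjoint disjoint_iff)
qed

lemma occ_cong: "(\<And>i. i \<in> A \<Longrightarrow> x i = y i) \<Longrightarrow> occ x A p = occ y A p"
  unfolding occ_def by (metis (mono_tags, lifting) mem_Collect_eq)

lemma sum_occ_le_card:
  assumes "finite A" "finite P"
  shows "(\<Sum>p\<in>P. occ x A p) \<le> card A"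
proof -
  have "(\<Sum>p\<in>P. occ x A p) = card (\<Union>p\<in>P. {i \<in> A. x i = p})"
    unfolding occ_def using assms by (subst card_UN_disjoint) auto
  also have "\<dots> \<le> card A"
    using assms by (intro card_mono) auto
  finally show ?thesis .
qed

lemma abs_occ_diff_le:
  assumes "finite J" "I \<subseteq> J"
  shows "\<bar>int (occ x I p) - int (occ y J p)\<bar>
    \<le> int (occ x (mismatch x y I) p) + int (occ y (mismatch x y I) p) + int (occ y (J - I) p)"
proof -
  define D where "D = mismatch x y I"
  define R where "R = I - D"
  have "finite I" using assms finite_subset by blast
  then have fin: "finite I" "finite D" "finite R" by (simp_all add: D_def R_def)
  have I: "I = D \<union> R" and J: "J = I \<union> (J - I)"
    using assms by (auto simp: D_def R_def mismatch_def)
  have split_I: "occ z I p = occ z D p + occ z R p" for z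
    unfolding I using fin by (intro occ_Un) (auto simp: R_def)
  have "occ y (I \<union> (J - I)) p = occ y I p + occ y (J - I) p"
    using fin assms by (intro occ_Un) auto
  then have "occ y J p = occ y I p + occ y (J - I) p"
    using J by metis
  moreover have "occ x R p = occ y R p"
    by (rule occ_cong) (auto simp: R_def D_def mismatch_def)
  ultimately show ?thesis by (simp add: split_I D_def)
qed

lemma sum_abs_occ_diff_le:
  assumes "finite J" "I \<subseteq> J" "finite P"
  shows "(\<Sum>p\<in>P. \<bar>int (occ x I p) - int (occ y J p)\<bar>)
    \<le> 2 * int (card (mismatch x y I)) + int (card (J - I))"
proof -
  let ?D = "mismatch x y I"
  have finI: "finite I" using assms finite_subset by blast
  have "(\<Sum>p\<in>P. \<bar>int (occ x I p) - int (occ y J p)\<bar>)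
      \<le> (\<Sum>p\<in>P. int (occ x ?D p) + int (occ y ?D p) + int (occ y (J - I) p))"
    using assms by (intro sum_mono abs_occ_diff_le)
  also have "\<dots> = int (\<Sum>p\<in>P. occ x ?D p) + int (\<Sum>p\<in>P. occ y ?D p)
      + int (\<Sum>p\<in>P. occ y (J - I) p)"
    by (simp add: sum.distrib)
  also have "\<dots> \<le> int (card ?D) + int (card ?D) + int (card (J - I))"
    using assms finI by (intro add_mono of_nat_mono sum_occ_le_card) simp_all
  finally show ?thesis by simp
qed

fun coupling_inv :: "nat \<Rightarrow> cstate \<Rightarrow> bool" where
  "coupling_inv m (x, I, y, J, N) \<longleftrightarrow>
     finite J \<and> I \<subseteq> J \<and> J \<subseteq> {..N} \<and> card (mismatch x y I) + card (J - I) \<le> m"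

lemma top_label_mem:
  assumes "finite I" "I \<noteq> {}"
  shows "top_label x I \<in> I" "x (top_label x I) = Max (x ` I)"
proof -
  have "Max (x ` I) \<in> x ` I" using assms by simp
  then have "{l \<in> I. x l = Max (x ` I)} \<noteq> {}" by auto
  then have "top_label x I \<in> {l \<in> I. x l = Max (x ` I)}"
    unfolding top_label_def using assms by (intro Max_in) auto
  then show "top_label x I \<in> I" "x (top_label x I) = Max (x ` I)" by auto
qed

lemma top_label_max: "finite I \<Longrightarrow> l \<in> I \<Longrightarrow> x l \<le> x (top_label x I)"
  by (metis Max_ge empty_iff finite_imageI imageI top_label_mem(2))

lemma mismatch_relabel_y:
  assumes "y i \<le> y k" "x k \<le> y i"
  shows "mismatch x (y(k := y i)) (I - {i}) \<subseteq> mismatch x y I"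
  using assms by (auto simp: mismatch_def)

lemma mismatch_relabel_x:
  assumes "x k \<le> x i" "\<not> x k \<le> y i"
  shows "mismatch (x(i := x k)) y (I - {k}) \<subseteq> mismatch x y I"
  using assms by (auto simp: mismatch_def)

lemma card_Diff_remove_pair_le:
  assumes "finite J" "I \<subseteq> J" "i \<in> I" "k \<in> J" "k \<notin> I \<or> i = k"
  shows "card ((J - {k}) - (I - {i})) \<le> card (J - I)"
proof (cases "i = k")
  case True
  then show ?thesis using assms(3) by (simp add: Diff_insert2[symmetric] insert_absorb)
next
  case False
  then have "(J - {k}) - (I - {i}) = insert i ((J - I) - {k})"
    using assms by auto
  moreover have "Suc (card ((J - I) - {k})) = card (J - I)"
    using False assms by (intro card_Suc_Diff1) auto
  ultimately show ?thesis by (simp add: card_insert_le_m1)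
qed

lemma coupling_inv_exit_state:
  assumes "coupling_inv m s"
  shows "coupling_inv m (exit_state s)"
proof -
  obtain x I y J N where s: "s = (x, I, y, J, N)" by (cases s)
  have finJ: "finite J" and IJ: "I \<subseteq> J" and JN: "J \<subseteq> {..N}"
    and c: "card (mismatch x y I) + card (J - I) \<le> m"
    using assms s by auto
  have finI: "finite I" using finJ IJ finite_subset by blast
  show ?thesis
  proof (cases "I = {}")
    case True
    then show ?thesis
      using s finJ JN c card_Diff1_le[of J "top_label y J"] by (auto simp: exit_state_def)
  next
    case False
    define i where "i = top_label x I"
    define k where "k = top_label y J"
    have iI: "i \<in> I" and kJ: "k \<in> J"
      using top_label_mem(1) finI finJ False IJ by (auto simp: i_def k_def)
    consider (relabel_y) "k \<in> I" "i \<noteq> k" "x k \<le> y i"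
      | (relabel_x) "k \<in> I" "i \<noteq> k" "\<not> x k \<le> y i"
      | (plain) "k \<notin> I \<or> i = k"
      by blast
    then show ?thesis
    proof cases
      case relabel_y
      have "y i \<le> y k" using top_label_max[OF finJ] iI IJ by (auto simp: k_def)
      then have "card (mismatch x (y(k := y i)) (I - {i})) \<le> card (mismatch x y I)"
        using relabel_y finI by (intro card_mono mismatch_relabel_y) auto
      moreover have "(J - {i}) - (I - {i}) = J - I" using iI by auto
      ultimately show ?thesis
        using s False relabel_y c finJ IJ JN
        by (auto simp: exit_state_def Let_def i_def k_def)
    next
      case relabel_x
      have "x k \<le> x i" using top_label_max[OF finI] relabel_x by (auto simp: i_def)
      then have "card (mismatch (x(i := x k)) y (I - {k})) \<le> card (mismatch x y I)"
        using relabel_x finI by (intro card_mono mismatch_relabel_x) auto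
      moreover have "(J - {k}) - (I - {k}) = J - I" using relabel_x by auto
      ultimately show ?thesis
        using s False relabel_x c finJ IJ JN
        by (auto simp: exit_state_def Let_def i_def k_def)
    next
      case plain
      have "card (mismatch x y (I - {i})) \<le> card (mismatch x y I)"
        using finI by (intro card_mono) (auto simp: mismatch_def)
      moreover have "card ((J - {k}) - (I - {i})) \<le> card (J - I)"
        using finJ IJ iI kJ plain by (rule card_Diff_remove_pair_le)
      moreover have "I - {i} \<subseteq> J - {k}" using plain IJ by auto
      ultimately show ?thesis
        using s False plain c finJ JN
        by (auto simp: exit_state_def Let_def i_def k_def)
    qed
  qed
qed

lemma coupling_inv_cstep:
  assumes "cstep M s t" "coupling_inv m s"
  shows "coupling_inv m t"
  using assms
proof (induction rule: cstep.induct)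
  case (move_x i I x y d J N)
  then have "card (mismatch (x(i := x i + d)) y I) \<le> card (mismatch x y I)"
    by (intro card_mono) (auto simp: mismatch_def intro: finite_subset)
  then show ?case using move_x.prems by auto
next
  case (move_y i J I x y d N)
  then have "card (mismatch x (y(i := y i + d)) I) \<le> card (mismatch x y I)"
    by (intro card_mono) (auto simp: mismatch_def intro: finite_subset)
  then show ?case using move_y.prems by auto
next
  case (move_both i I x y d J N)
  then have "mismatch (x(i := x i + d)) (y(i := x i + d)) I = mismatch x y I"
    by (auto simp: mismatch_def)
  then show ?case using move_both.prems by auto
next
  case (arrive x I y J N)
  then have new: "Suc N \<notin> J" "Suc N \<notin> I" by auto
  then have "mismatch (x(Suc N := 0)) (y(Suc N := 0)) (insert (Suc N) I) = mismatch x y I"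
    by (auto simp: mismatch_def)
  moreover have "insert (Suc N) J - insert (Suc N) I = J - I" using new by auto
  ultimately show ?case using arrive by auto
next
  case (leave s)
  then show ?case by (rule coupling_inv_exit_state)
qed

lemma coupling_inv_reachable:
  "(cstep M)\<^sup>*\<^sup>* s t \<Longrightarrow> coupling_inv m s \<Longrightarrow> coupling_inv m t"
  by (induction rule: rtranclp_induct) (auto intro: coupling_inv_cstep)

lemma coupling_inv_initial:
  assumes "\<forall>i \<in> {1..n}. x0 i = y0 i"
  shows "coupling_inv m (x0, {1..n}, y0, {1..n+m}, n+m)"
proof -
  have "mismatch x0 y0 {1..n} = {}" using assms by (auto simp: mismatch_def)
  moreover have "card ({1..n+m} - {1..n}) = m" by (subst card_Diff_subset) auto
  ultimately show ?thesis by simp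
qed

theorem lemma4p4:
  fixes eps j :: real and M n m :: nat
    and x0 y0 x y :: "nat \<Rightarrow> int" and I J :: "nat set" and N :: nat
  assumes "j > 0" and "eps > 0" and "1 / eps = real M"
    and "n > 0"
    and "\<forall>i \<in> {1..n}. 0 \<le> x0 i \<and> x0 i \<le> int M"
    and "\<forall>i \<in> {1..n+m}. 0 \<le> y0 i \<and> y0 i \<le> int M"
    and "\<forall>i \<in> {1..n}. x0 i = y0 i"
    and "(cstep M)\<^sup>*\<^sup>* (x0, {1..n}, y0, {1..n+m}, n+m) (x, I, y, J, N)"
  shows "(\<Sum>p = 0..int M. \<bar>int (occ x I p) - int (occ y J p)\<bar>)
           \<le> int (card {i \<in> I. x i \<noteq> y i}) + int m"
proof -
  have "coupling_inv m (x, I, y, J, N)"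
    using coupling_inv_reachable[OF assms(8) coupling_inv_initial[OF assms(7)]] .
  then have "finite J" "I \<subseteq> J" and budget: "card (mismatch x y I) + card (J - I) \<le> m"
    by auto
  then have "(\<Sum>p = 0..int M. \<bar>int (occ x I p) - int (occ y J p)\<bar>)
      \<le> 2 * int (card (mismatch x y I)) + int (card (J - I))"
    by (intro sum_abs_occ_diff_le) auto
  with budget show ?thesis by (simp add: mismatch_def)
qed

end
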